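(* Let $k$ be an infinite field of characteristic $0$, $X_1\subseteq X_2$, $Y_1\subseteq Y_2$ finite sets, $W_i=W(X_i,Y_i)=(L(X_i),A(X_i)Y_i)$ ($i=1,2$), and $H$ a representation. If $(T_1,T_2)$ with $T_1\subseteq L(X_2)$, $T_2\subseteq A(X_2)Y_2$ is $H$-closed in $W_2$, then $(T_1\cap L(X_1),\,T_2\cap A(X_1)Y_1)$ is $H$-closed in $W_1$.
   Context: A representation $H=(L,V)$ is a Lie algebra $L$ over $k$ with an $L$-module $V$; homomorphisms $(\varphi,\psi)$: Lie homomorphism $\varphi$, linear $\psi$, $\varphi(l)\circ\psi(v)=\psi(l\circ v)$. $L(X)$ free Lie algebra, $A(X)$ free associative algebra with unit, $A(X)Y$ free $A(X)$-module with basis $Y$; $W_1$ is regarded as a subrepresentation of $W_2$. For $W=W(X,Y)$ and $S_1\subseteq L(X)$, $S_2\subseteq A(X)Y$: $(S_1,S_2)'_{W,H}$ is the set of homomorphisms $(\varphi,\psi):W\to H$ with $S_1\subseteq\ker\varphi$, $S_2\subseteq\ker\psi$, $(S_1,S_2)''_{W,H}$ is the pair (intersection of these $\ker\varphi$, intersection of these $\ker\psi$), and $(S_1,S_2)$ is $H$-closed in $W$ if $(S_1,S_2)''_{W,H}=(S_1,S_2)$. *)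

theory Defs
  imports Complex_Main
begin

text \<open>Free associative algebra A(X) over k: elements are functions from words
 (x list) to k; the product is concatenation convolution. The free Lie algebra
 L(X) is realised (as usual) as the Lie subalgebra of A(X) generated by X, with
 bracket [p,q] = pq - qp. The free A(X)-module A(X)Y consists of finitely
 supported functions on words times Y.\<close>

definition wmul :: "('x list \<Rightarrow> 'k::field) \<Rightarrow> ('x list \<Rightarrow> 'k) \<Rightarrow> 'x list \<Rightarrow> 'k" where
  "wmul p q = (\<lambda>w. \<Sum>i\<le>length w. p (take i w) * q (drop i w))"

definition wbr :: "('x list \<Rightarrow> 'k::field) \<Rightarrow> ('x list \<Rightarrow> 'k) \<Rightarrow> 'x list \<Rightarrow> 'k" where
  "wbr p q = (\<lambda>w. wmul p q w - wmul q p w)"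

definition letter :: "'x \<Rightarrow> 'x list \<Rightarrow> 'k::field" where
  "letter x = (\<lambda>w. if w = [x] then 1 else 0)"

inductive_set freeLie :: "'x set \<Rightarrow> ('x list \<Rightarrow> 'k::field) set" for X :: "'x set" where
  gen: "x \<in> X \<Longrightarrow> letter x \<in> freeLie X"
| zero: "(\<lambda>_. 0) \<in> freeLie X"
| add: "p \<in> freeLie X \<Longrightarrow> q \<in> freeLie X \<Longrightarrow> (\<lambda>w. p w + q w) \<in> freeLie X"
| smult: "p \<in> freeLie X \<Longrightarrow> (\<lambda>w. c * p w) \<in> freeLie X"
| br: "p \<in> freeLie X \<Longrightarrow> q \<in> freeLie X \<Longrightarrow> wbr p q \<in> freeLie X"

definition freeMod :: "'x set \<Rightarrow> 'y set \<Rightarrow> ('x list \<times> 'y \<Rightarrow> 'k::field) set" where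
  "freeMod X Y = {m. finite {p. m p \<noteq> 0} \<and> (\<forall>w y. m (w, y) \<noteq> 0 \<longrightarrow> set w \<subseteq> X \<and> y \<in> Y)}"

definition act_free :: "('x list \<Rightarrow> 'k::field) \<Rightarrow> ('x list \<times> 'y \<Rightarrow> 'k) \<Rightarrow> 'x list \<times> 'y \<Rightarrow> 'k" where
  "act_free p m = (\<lambda>(w, y). \<Sum>i\<le>length w. p (take i w) * m (drop i w, y))"

text \<open>A representation H = (L,V): Lie algebra L over k (scalar sL, bracket br)
 with an L-module V (scalar sV, action act).\<close>
definition lie_rep :: "('k::field \<Rightarrow> 'l::ab_group_add \<Rightarrow> 'l) \<Rightarrow> ('l \<Rightarrow> 'l \<Rightarrow> 'l)
   \<Rightarrow> ('k \<Rightarrow> 'v::ab_group_add \<Rightarrow> 'v) \<Rightarrow> ('l \<Rightarrow> 'v \<Rightarrow> 'v) \<Rightarrow> bool" where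
  "lie_rep sL br sV act \<longleftrightarrow>
     vector_space sL \<and> vector_space sV \<and>
     (\<forall>a b c. br (a + b) c = br a c + br b c) \<and>
     (\<forall>a b c. br a (b + c) = br a b + br a c) \<and>
     (\<forall>r a b. br (sL r a) b = sL r (br a b)) \<and>
     (\<forall>r a b. br a (sL r b) = sL r (br a b)) \<and>
     (\<forall>a. br a a = 0) \<and>
     (\<forall>a b c. br a (br b c) + br b (br c a) + br c (br a b) = 0) \<and>
     (\<forall>a b v. act (a + b) v = act a v + act b v) \<and>
     (\<forall>a v u. act a (v + u) = act a v + act a u) \<and>
     (\<forall>r a v. act (sL r a) v = sV r (act a v)) \<and>
     (\<forall>r a v. act a (sV r v) = sV r (act a v)) \<and>
     (\<forall>a b v. act (br a b) v = act a (act b v) - act b (act a v))"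

definition rep_hom :: "'x set \<Rightarrow> 'y set \<Rightarrow> ('k::field \<Rightarrow> 'l::ab_group_add \<Rightarrow> 'l) \<Rightarrow> ('l \<Rightarrow> 'l \<Rightarrow> 'l)
   \<Rightarrow> ('k \<Rightarrow> 'v::ab_group_add \<Rightarrow> 'v) \<Rightarrow> ('l \<Rightarrow> 'v \<Rightarrow> 'v)
   \<Rightarrow> (('x list \<Rightarrow> 'k) \<Rightarrow> 'l) \<Rightarrow> (('x list \<times> 'y \<Rightarrow> 'k) \<Rightarrow> 'v) \<Rightarrow> bool" where
  "rep_hom X Y sL br sV act \<phi> \<psi> \<longleftrightarrow>
     (\<forall>p\<in>freeLie X. \<forall>q\<in>freeLie X. \<phi> (\<lambda>w. p w + q w) = \<phi> p + \<phi> q) \<and>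
     (\<forall>c. \<forall>p\<in>freeLie X. \<phi> (\<lambda>w. c * p w) = sL c (\<phi> p)) \<and>
     (\<forall>p\<in>freeLie X. \<forall>q\<in>freeLie X. \<phi> (wbr p q) = br (\<phi> p) (\<phi> q)) \<and>
     (\<forall>m\<in>freeMod X Y. \<forall>n\<in>freeMod X Y. \<psi> (\<lambda>u. m u + n u) = \<psi> m + \<psi> n) \<and>
     (\<forall>c. \<forall>m\<in>freeMod X Y. \<psi> (\<lambda>u. c * m u) = sV c (\<psi> m)) \<and>
     (\<forall>p\<in>freeLie X. \<forall>m\<in>freeMod X Y. act (\<phi> p) (\<psi> m) = \<psi> (act_free p m))"

definition kerL :: "'x set \<Rightarrow> (('x list \<Rightarrow> 'k::field) \<Rightarrow> 'l::zero) \<Rightarrow> ('x list \<Rightarrow> 'k) set" where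
  "kerL X \<phi> = {p \<in> freeLie X. \<phi> p = 0}"

definition kerM :: "'x set \<Rightarrow> 'y set \<Rightarrow> (('x list \<times> 'y \<Rightarrow> 'k::field) \<Rightarrow> 'v::zero)
   \<Rightarrow> ('x list \<times> 'y \<Rightarrow> 'k) set" where
  "kerM X Y \<psi> = {m \<in> freeMod X Y. \<psi> m = 0}"

definition dprime where
  "dprime X Y sL br sV act S1 S2 =
     {(\<phi>, \<psi>). rep_hom X Y sL br sV act \<phi> \<psi> \<and> S1 \<subseteq> kerL X \<phi> \<and> S2 \<subseteq> kerM X Y \<psi>}"

definition ddprime where
  "ddprime X Y sL br sV act S1 S2 =
     (\<Inter> {kerL X \<phi> | \<phi> \<psi>. (\<phi>, \<psi>) \<in> dprime X Y sL br sV act S1 S2},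
      \<Inter> {kerM X Y \<psi> | \<phi> \<psi>. (\<phi>, \<psi>) \<in> dprime X Y sL br sV act S1 S2})"

definition H_closed where
  "H_closed X Y sL br sV act S1 S2 \<longleftrightarrow> ddprime X Y sL br sV act S1 S2 = (S1, S2)"

end

theory Submission
  imports Defs
begin

text \<open>Every homomorphism W(X2,Y2) \<rightarrow> H restricts to a homomorphism W(X1,Y1) \<rightarrow> H
  that kills the traces of the given pair on W(X1,Y1). Hence an element of W(X1,Y1) annihilated
  by all homomorphisms relevant in W(X1,Y1) is annihilated by all those relevant in W(X2,Y2),
  so it lies in the closed pair. The zero homomorphism keeps the intersection of kernels in
  W(X1,Y1) inside W(X1,Y1). Finiteness of the generating sets and characteristic 0 play
  no role in this argument.\<close>

lemma freeLie_mono: "X1 \<subseteq> X2 \<Longrightarrow> freeLie X1 \<subseteq> freeLie X2"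
proof
  show "p \<in> freeLie X2" if "p \<in> freeLie X1" and "X1 \<subseteq> X2" for p
    using that by (induction rule: freeLie.induct) (auto intro: freeLie.intros)
qed

lemma freeMod_mono: "X1 \<subseteq> X2 \<Longrightarrow> Y1 \<subseteq> Y2 \<Longrightarrow> freeMod X1 Y1 \<subseteq> freeMod X2 Y2"
  unfolding freeMod_def by blast

lemma rep_hom_restrict:
  assumes "rep_hom X2 Y2 sL br sV act \<phi> \<psi>" and "X1 \<subseteq> X2" and "Y1 \<subseteq> Y2"
  shows "rep_hom X1 Y1 sL br sV act \<phi> \<psi>"
  using assms freeLie_mono[OF assms(2)] freeMod_mono[OF assms(2,3)]
  unfolding rep_hom_def by (meson subsetD)

lemma rep_hom_zero:
  assumes "lie_rep sL br sV act"
  shows "rep_hom X Y sL br sV act (\<lambda>_. 0) (\<lambda>_. 0)"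
proof -
  from assms have vs: "vector_space sL" "vector_space sV"
    and act_add: "\<forall>a v u. act a (v + u) = act a v + act a u" and br_self: "\<forall>a. br a a = 0"
    unfolding lie_rep_def by auto
  have "act 0 0 = act 0 0 + act 0 0"
    using act_add by (metis add_0)
  then have act_zero: "act 0 0 = 0" by simp
  have "sL c 0 = 0" "sV c 0 = 0" for c
    using vs module.scale_zero_right unfolding module_iff_vector_space[symmetric] by auto
  with br_self act_zero show ?thesis
    unfolding rep_hom_def by auto
qed

lemma kerL_zero: "kerL X (\<lambda>_. 0) = freeLie X"
  unfolding kerL_def by simp

lemma kerM_zero: "kerM X Y (\<lambda>_. 0) = freeMod X Y"
  unfolding kerM_def by simp

lemma kerL_mono: "X1 \<subseteq> X2 \<Longrightarrow> kerL X1 \<phi> \<subseteq> kerL X2 \<phi>"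
  using freeLie_mono unfolding kerL_def by blast

lemma kerM_mono: "X1 \<subseteq> X2 \<Longrightarrow> Y1 \<subseteq> Y2 \<Longrightarrow> kerM X1 Y1 \<psi> \<subseteq> kerM X2 Y2 \<psi>"
  using freeMod_mono unfolding kerM_def by blast

lemma zero_in_dprime:
  assumes "lie_rep sL br sV act" and "S1 \<subseteq> freeLie X" and "S2 \<subseteq> freeMod X Y"
  shows "((\<lambda>_. 0), (\<lambda>_. 0)) \<in> dprime X Y sL br sV act S1 S2"
  using assms rep_hom_zero[OF assms(1)] by (simp add: dprime_def kerL_zero kerM_zero)

lemma dprime_restrict:
  assumes "(\<phi>, \<psi>) \<in> dprime X2 Y2 sL br sV act S1 S2" and "X1 \<subseteq> X2" and "Y1 \<subseteq> Y2"
  shows "(\<phi>, \<psi>) \<in> dprime X1 Y1 sL br sV act (S1 \<inter> freeLie X1) (S2 \<inter> freeMod X1 Y1)"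
  using assms rep_hom_restrict[OF _ assms(2,3)]
  unfolding dprime_def kerL_def kerM_def by auto

lemma ddprime_supset:
  "S1 \<subseteq> fst (ddprime X Y sL br sV act S1 S2)" "S2 \<subseteq> snd (ddprime X Y sL br sV act S1 S2)"
  unfolding ddprime_def dprime_def by auto

lemma ddprime_subset_free:
  fixes sL :: "'k::field \<Rightarrow> 'l::ab_group_add \<Rightarrow> 'l" and sV :: "'k \<Rightarrow> 'v::ab_group_add \<Rightarrow> 'v"
  assumes "lie_rep sL br sV act" and "S1 \<subseteq> freeLie X" and "S2 \<subseteq> freeMod X Y"
  shows "fst (ddprime X Y sL br sV act S1 S2) \<subseteq> freeLie X"
    and "snd (ddprime X Y sL br sV act S1 S2) \<subseteq> freeMod X Y"
proof -
  note zero = zero_in_dprime[OF assms]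
  have "\<Inter> {kerL X \<phi> | \<phi> \<psi>. (\<phi>, \<psi>) \<in> dprime X Y sL br sV act S1 S2} \<subseteq> kerL X (\<lambda>_. 0 :: 'l)"
    using zero by (intro Inter_lower) blast
  then show "fst (ddprime X Y sL br sV act S1 S2) \<subseteq> freeLie X"
    by (simp only: ddprime_def fst_conv kerL_zero)
  have "\<Inter> {kerM X Y \<psi> | \<phi> \<psi>. (\<phi>, \<psi>) \<in> dprime X Y sL br sV act S1 S2} \<subseteq> kerM X Y (\<lambda>_. 0 :: 'v)"
    using zero by (intro Inter_lower) blast
  then show "snd (ddprime X Y sL br sV act S1 S2) \<subseteq> freeMod X Y"
    by (simp only: ddprime_def snd_conv kerM_zero)
qed

lemma ddprime_restrict_subset:
  assumes "X1 \<subseteq> X2" and "Y1 \<subseteq> Y2"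
  shows "fst (ddprime X1 Y1 sL br sV act (S1 \<inter> freeLie X1) (S2 \<inter> freeMod X1 Y1))
           \<subseteq> fst (ddprime X2 Y2 sL br sV act S1 S2)"
    and "snd (ddprime X1 Y1 sL br sV act (S1 \<inter> freeLie X1) (S2 \<inter> freeMod X1 Y1))
           \<subseteq> snd (ddprime X2 Y2 sL br sV act S1 S2)"
proof -
  let ?D1 = "dprime X1 Y1 sL br sV act (S1 \<inter> freeLie X1) (S2 \<inter> freeMod X1 Y1)"
  let ?D2 = "dprime X2 Y2 sL br sV act S1 S2"
  show "fst (ddprime X1 Y1 sL br sV act (S1 \<inter> freeLie X1) (S2 \<inter> freeMod X1 Y1))
           \<subseteq> fst (ddprime X2 Y2 sL br sV act S1 S2)"
    unfolding ddprime_def fst_conv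
  proof (rule Inter_greatest)
    fix K assume "K \<in> {kerL X2 \<phi> | \<phi> \<psi>. (\<phi>, \<psi>) \<in> ?D2}"
    then obtain \<phi> \<psi> where K: "K = kerL X2 \<phi>" and hom: "(\<phi>, \<psi>) \<in> ?D2" by blast
    have "\<Inter> {kerL X1 \<phi> | \<phi> \<psi>. (\<phi>, \<psi>) \<in> ?D1} \<subseteq> kerL X1 \<phi>"
      using dprime_restrict[OF hom assms] by (intro Inter_lower) blast
    then show "\<Inter> {kerL X1 \<phi> | \<phi> \<psi>. (\<phi>, \<psi>) \<in> ?D1} \<subseteq> K"
      using K kerL_mono[OF assms(1)] by blast
  qed
  show "snd (ddprime X1 Y1 sL br sV act (S1 \<inter> freeLie X1) (S2 \<inter> freeMod X1 Y1))
           \<subseteq> snd (ddprime X2 Y2 sL br sV act S1 S2)"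
    unfolding ddprime_def snd_conv
  proof (rule Inter_greatest)
    fix K assume "K \<in> {kerM X2 Y2 \<psi> | \<phi> \<psi>. (\<phi>, \<psi>) \<in> ?D2}"
    then obtain \<phi> \<psi> where K: "K = kerM X2 Y2 \<psi>" and hom: "(\<phi>, \<psi>) \<in> ?D2" by blast
    have "\<Inter> {kerM X1 Y1 \<psi> | \<phi> \<psi>. (\<phi>, \<psi>) \<in> ?D1} \<subseteq> kerM X1 Y1 \<psi>"
      using dprime_restrict[OF hom assms] by (intro Inter_lower) blast
    then show "\<Inter> {kerM X1 Y1 \<psi> | \<phi> \<psi>. (\<phi>, \<psi>) \<in> ?D1} \<subseteq> K"
      using K kerM_mono[OF assms] by blast
  qed
qed

theorem proposition2:
  fixes X1 X2 :: "'x set" and Y1 Y2 :: "'y set"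
    and sL :: "'k::field_char_0 \<Rightarrow> 'l::ab_group_add \<Rightarrow> 'l" and br :: "'l \<Rightarrow> 'l \<Rightarrow> 'l"
    and sV :: "'k \<Rightarrow> 'v::ab_group_add \<Rightarrow> 'v" and act :: "'l \<Rightarrow> 'v \<Rightarrow> 'v"
    and T1 :: "('x list \<Rightarrow> 'k) set" and T2 :: "('x list \<times> 'y \<Rightarrow> 'k) set"
  assumes "lie_rep sL br sV act"
    and "finite X1" and "finite X2" and "X1 \<subseteq> X2"
    and "finite Y1" and "finite Y2" and "Y1 \<subseteq> Y2"
    and "T1 \<subseteq> freeLie X2" and "T2 \<subseteq> freeMod X2 Y2"
    and "H_closed X2 Y2 sL br sV act T1 T2"
  shows "H_closed X1 Y1 sL br sV act (T1 \<inter> freeLie X1) (T2 \<inter> freeMod X1 Y1)"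
proof -
  let ?D1 = "ddprime X1 Y1 sL br sV act (T1 \<inter> freeLie X1) (T2 \<inter> freeMod X1 Y1)"
  have closed: "ddprime X2 Y2 sL br sV act T1 T2 = (T1, T2)"
    using assms(10) unfolding H_closed_def .
  have "fst ?D1 \<subseteq> T1" "snd ?D1 \<subseteq> T2"
    using ddprime_restrict_subset[OF assms(4,7), of sL br sV act T1 T2] closed by simp_all
  moreover have "fst ?D1 \<subseteq> freeLie X1" "snd ?D1 \<subseteq> freeMod X1 Y1"
    by (rule ddprime_subset_free[OF assms(1) Int_lower2 Int_lower2])+
  moreover have "T1 \<inter> freeLie X1 \<subseteq> fst ?D1" "T2 \<inter> freeMod X1 Y1 \<subseteq> snd ?D1"
    by (fact ddprime_supset)+
  ultimately show ?thesis
    unfolding H_closed_def by (simp add: prod_eq_iff set_eq_subset)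
qed

end
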